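(* Fix a mode index $n$. Let $J_{1,n}$ be a complex structure on $\mathcal S_n^R$ that is positive with respect to $W$. Define $J_n=J_{1,n}\otimes I_{2,n}$ on $\mathcal H_n^R$, where $I_{2,n}$ is the identity on $\mathcal E_n^R$; concretely, for any basis $\{E_a\}$ of $\mathcal E_n$, $J_n\sum_a f_aE_a=\sum_a(J_{1,n}f_a)E_a$. Then: (i) $J_n$ is a complex structure on $\mathcal H_n^R$; (ii) $J_n$ is positive with respect to $w$; (iii) $J_n$ is invariant under the structural isometries, i.e. it commutes with the action $T(f(x^A)F(x^j))=f(x^A)\,(TF)(x^j)$ of every isometry $T$ of $(V_2,\gamma)$.
   Context: Setting: $V=V_1\times V_2$ with metric $g=\alpha\oplus(-S)\gamma$. - $(V_1,\alpha)$ is a $p$-dimensional Lorentzian manifold with coordinates $x^A$. - $(V_2,\gamma)$ is a $q$-dimensional compact connected Riemannian manifold with coordinates $x^i$. - $S>0$ is a smooth function on $V_1$. - Standing assumption: either $(V_1,\alpha)\approx\mathbb R\times(\text{compact})$, or $(V_1,\alpha)$ is globally hyperbolic and the solutions considered on $V_1$ arise from compactly supported Cauchy data. This makes the integrals below finite. Klein–Gordon equation and modes: - The Klein–Gordon equation is $(\nabla^2+m^2)\psi=0$ for $g$. - $\Delta_2$ is the Laplacian of $\gamma$, and $\lambda_n$ is the $n$-th eigenvalue of $-\Delta_2$. - $\mathcal E_n$ is the (finite-dimensional) eigenspace of $\lambda_n$, with positive scalar product $\langle F,H\rangle_2=\int_{V_2}F^*H\sqrt\gamma\,d^qx$. $\mathcal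 E_n^R$ denotes its real elements. - The mode space $\mathcal H_n$ consists of the solutions of the Klein–Gordon equation with $-\Delta_2\Phi=\lambda_n\Phi$. $\mathcal H_n^R$ denotes its real elements. - $\mathcal S_n$ (resp. $\mathcal S_n^R$) is the space of complex (resp. real) smooth functions $f$ on $V_1$ solving $(\Delta_1^\sharp+\lambda_nS^{-1}+m^2)f=0$, where $\Delta_1^\sharp f=|\alpha|^{-1/2}S^{-q/2}\partial_A(|\alpha|^{1/2}S^{q/2}\alpha^{AB}\partial_Bf)$. - One has $\mathcal H_n=\mathcal S_n\otimes\mathcal E_n$: every $\Phi\in\mathcal H_n$ is $\sum_af_aE_a$ with $f_a\in\mathcal S_n$ and $\{E_a\}$ a real orthonormal basis of $\mathcal E_n$. Skew forms: - On $\mathcal S_n^R$: $W(f,h)=\int_LS^{q/2}(f\alpha^{AB}\partial_Bh-h\alpha^{AB}\partial_Bf)\,dL_A$, where $L$ is any spacelike $(p-1)$-surface in $V_1$. This is independent of $L$. - $w$ is the restriction to $\mathcal H_n$ of $\varpi(\phi,\psi)=\int_\Sigma(\phi\nabla^\mu\psi-\psi\nabla^\mu\phi)\,d\Sigma_\mu$. - These forms satisfy $w(fF,hH)=W(f,h)\langle F,H\rangle_2$. Complex structures: - A complex structure is a real linear operator $J$ with $J^2=-1$. - $J$ is positive with respect to a skew form $w$ if $w(J\Phi,J\Psi)=w(\Phi,\Psi)$ for all $\Phi,\Psi$, and $w(\Phi,J\Phi)>0$ for all $\Phi\ne0$. *)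

theory Defs
  imports Complex_Main
begin

definition lcomb :: "real \<Rightarrow> ('a \<Rightarrow> real) \<Rightarrow> real \<Rightarrow> ('a \<Rightarrow> real) \<Rightarrow> ('a \<Rightarrow> real)" where
  "lcomb a f b g = (\<lambda>x. a * f x + b * g x)"

definition fun_subspace :: "('a \<Rightarrow> real) set \<Rightarrow> bool" where
  "fun_subspace V \<longleftrightarrow> (\<lambda>_. 0) \<in> V \<and> (\<forall>f\<in>V. \<forall>g\<in>V. \<forall>a b. lcomb a f b g \<in> V)"

definition lin_on :: "('a \<Rightarrow> real) set \<Rightarrow> (('a \<Rightarrow> real) \<Rightarrow> ('b \<Rightarrow> real)) \<Rightarrow> bool" where
  "lin_on V L \<longleftrightarrow> (\<forall>f\<in>V. \<forall>g\<in>V. \<forall>a b. L (lcomb a f b g) = lcomb a (L f) b (L g))"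

definition bilin_on :: "('a \<Rightarrow> real) set \<Rightarrow> (('a \<Rightarrow> real) \<Rightarrow> ('a \<Rightarrow> real) \<Rightarrow> real) \<Rightarrow> bool" where
  "bilin_on V B \<longleftrightarrow>
     (\<forall>f\<in>V. \<forall>g\<in>V. \<forall>h\<in>V. \<forall>a b.
        B (lcomb a f b g) h = a * B f h + b * B g h \<and>
        B h (lcomb a f b g) = a * B h f + b * B h g)"

definition skew_form_on :: "('a \<Rightarrow> real) set \<Rightarrow> (('a \<Rightarrow> real) \<Rightarrow> ('a \<Rightarrow> real) \<Rightarrow> real) \<Rightarrow> bool" where
  "skew_form_on V B \<longleftrightarrow> bilin_on V B \<and> (\<forall>f\<in>V. \<forall>g\<in>V. B f g = - B g f)"

definition complex_structure_on :: "('a \<Rightarrow> real) set \<Rightarrow> (('a \<Rightarrow> real) \<Rightarrow> ('a \<Rightarrow> real)) \<Rightarrow> bool" where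
  "complex_structure_on V J \<longleftrightarrow>
     lin_on V J \<and> (\<forall>f\<in>V. J f \<in> V \<and> J (J f) = (\<lambda>x. - f x))"

definition positive_wrt :: "('a \<Rightarrow> real) set \<Rightarrow> (('a \<Rightarrow> real) \<Rightarrow> ('a \<Rightarrow> real) \<Rightarrow> real)
     \<Rightarrow> (('a \<Rightarrow> real) \<Rightarrow> ('a \<Rightarrow> real)) \<Rightarrow> bool" where
  "positive_wrt V B J \<longleftrightarrow>
     (\<forall>f\<in>V. \<forall>g\<in>V. B (J f) (J g) = B f g) \<and>
     (\<forall>f\<in>V. f \<noteq> (\<lambda>_. 0) \<longrightarrow> B f (J f) > 0)"

definition prodf :: "('p \<Rightarrow> real) \<Rightarrow> ('q \<Rightarrow> real) \<Rightarrow> ('p \<times> 'q \<Rightarrow> real)" where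
  "prodf f F = (\<lambda>(x, y). f x * F y)"

text \<open>The real tensor product S (x) E realised as functions on V1 x V2:
  all finite sums of products f F with f in S, F in E.\<close>
definition tensor_space :: "('p \<Rightarrow> real) set \<Rightarrow> ('q \<Rightarrow> real) set \<Rightarrow> ('p \<times> 'q \<Rightarrow> real) set" where
  "tensor_space S E = {\<Phi>. \<exists>(I::nat set) f F. finite I \<and> (\<forall>i\<in>I. f i \<in> S \<and> F i \<in> E) \<and>
                          \<Phi> = (\<lambda>z. \<Sum>i\<in>I. prodf (f i) (F i) z)}"

definition orthonormal_basis :: "('q \<Rightarrow> real) set \<Rightarrow> (('q \<Rightarrow> real) \<Rightarrow> ('q \<Rightarrow> real) \<Rightarrow> real)
     \<Rightarrow> ('q \<Rightarrow> real) set \<Rightarrow> bool" where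
  "orthonormal_basis E ip B \<longleftrightarrow> finite B \<and> B \<subseteq> E \<and>
     (\<forall>a\<in>B. \<forall>b\<in>B. ip a b = (if a = b then 1 else 0)) \<and>
     (\<forall>F\<in>E. \<exists>c. F = (\<lambda>y. \<Sum>b\<in>B. c b * b y))"

text \<open>J_n = J_{1,n} (x) I_{2,n}: writing Phi = sum_a f_a E_a over the basis B,
  J_n Phi = sum_a (J_{1,n} f_a) E_a.\<close>
definition tensor_J :: "('p \<Rightarrow> real) set \<Rightarrow> ('q \<Rightarrow> real) set \<Rightarrow> (('p \<Rightarrow> real) \<Rightarrow> ('p \<Rightarrow> real))
     \<Rightarrow> ('p \<times> 'q \<Rightarrow> real) \<Rightarrow> ('p \<times> 'q \<Rightarrow> real)" where
  "tensor_J S B J1 \<Phi> =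
     (let c = (SOME c. (\<forall>b\<in>B. c b \<in> S) \<and> \<Phi> = (\<lambda>z. \<Sum>b\<in>B. prodf (c b) b z))
      in (\<lambda>z. \<Sum>b\<in>B. prodf (J1 (c b)) b z))"

text \<open>Action of a point map T of V2 on functions on V1 x V2:
  T(f(x^A) F(x^j)) = f(x^A) (TF)(x^j), with (TF) = F o T^{-1}.\<close>
definition act2 :: "('q \<Rightarrow> 'q) \<Rightarrow> ('p \<times> 'q \<Rightarrow> real) \<Rightarrow> ('p \<times> 'q \<Rightarrow> real)" where
  "act2 T \<Phi> = (\<lambda>(x, y). \<Phi> (x, inv T y))"

end

theory Submission
  imports Defs
begin

text \<open>Expanding in the orthonormal basis B identifies S \<otimes> E with B-indexed families of
  elements of S. The coefficients are unique, since pairing with a basis vector under ip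
  extracts them, so tensor_J is well defined and acts coefficientwise. By orthonormality
  w becomes the sum of W over the coefficients, hence J \<circ> J = -1, invariance of w and
  positivity are inherited componentwise from J1. A map T of V2 that preserves E transforms
  the basis by a real matrix, i.e. acts on the coefficients by real linear combinations,
  which commute with the linear map J1.\<close>

lemma fun_subspace_zero: "fun_subspace V \<Longrightarrow> (\<lambda>_. 0) \<in> V"
  by (simp add: fun_subspace_def)

lemma fun_subspace_lcomb: "fun_subspace V \<Longrightarrow> f \<in> V \<Longrightarrow> g \<in> V \<Longrightarrow> lcomb a f b g \<in> V"
  by (simp add: fun_subspace_def)

lemma lcomb_insert_sum:
  "finite I \<Longrightarrow> j \<notin> I \<Longrightarrow>
   (\<lambda>x. \<Sum>i\<in>insert j I. a i * f i x) = lcomb (a j) (f j) 1 (\<lambda>x. \<Sum>i\<in>I. a i * f i x)"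
  by (simp add: lcomb_def)

lemma fun_subspace_sum:
  assumes V: "fun_subspace V" and "finite I" "\<forall>i\<in>I. f i \<in> V"
  shows "(\<lambda>x. \<Sum>i\<in>I. a i * f i x) \<in> V"
  using assms(2,3)
proof (induction I rule: finite_induct)
  case empty
  then show ?case using fun_subspace_zero[OF V] by simp
next
  case (insert j I)
  then show ?case
    unfolding lcomb_insert_sum[OF insert.hyps] by (intro fun_subspace_lcomb[OF V]) auto
qed

lemma lin_on_zero:
  assumes "fun_subspace V" and "lin_on V L"
  shows "L (\<lambda>_. 0) = (\<lambda>_. 0)"
proof -
  have "L (lcomb 0 (\<lambda>_. 0) 0 (\<lambda>_. 0)) = lcomb 0 (L (\<lambda>_. 0)) 0 (L (\<lambda>_. 0))"
    using assms fun_subspace_zero unfolding lin_on_def by blast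
  then show ?thesis by (simp add: lcomb_def)
qed

lemma lin_on_sum:
  assumes V: "fun_subspace V" and L: "lin_on V L" and "finite I" "\<forall>i\<in>I. f i \<in> V"
  shows "L (\<lambda>x. \<Sum>i\<in>I. a i * f i x) = (\<lambda>x. \<Sum>i\<in>I. a i * L (f i) x)"
  using assms(3,4)
proof (induction I rule: finite_induct)
  case empty
  then show ?case using lin_on_zero[OF V L] by simp
next
  case (insert j I)
  then have "(\<lambda>x. \<Sum>i\<in>I. a i * f i x) \<in> V" "f j \<in> V"
    using fun_subspace_sum[OF V] by auto
  with L have "L (lcomb (a j) (f j) 1 (\<lambda>x. \<Sum>i\<in>I. a i * f i x))
                 = lcomb (a j) (L (f j)) 1 (L (\<lambda>x. \<Sum>i\<in>I. a i * f i x))"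
    unfolding lin_on_def by blast
  also have "\<dots> = (\<lambda>x. \<Sum>i\<in>insert j I. a i * L (f i) x)"
    using insert by (simp add: lcomb_def)
  finally show ?case
    unfolding lcomb_insert_sum[OF insert.hyps] .
qed

lemma bilin_on_swap: "bilin_on V B \<Longrightarrow> bilin_on V (\<lambda>f g. B g f)"
  unfolding bilin_on_def by blast

lemma bilin_on_zero_left:
  assumes "fun_subspace V" and "bilin_on V B" and "h \<in> V"
  shows "B (\<lambda>_. 0) h = 0"
proof -
  have "B (lcomb 0 (\<lambda>_. 0) 0 (\<lambda>_. 0)) h = 0 * B (\<lambda>_. 0) h + 0 * B (\<lambda>_. 0) h"
    using assms fun_subspace_zero unfolding bilin_on_def by blast
  then show ?thesis by (simp add: lcomb_def)
qed

lemma bilin_on_sum_left: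
  assumes V: "fun_subspace V" and Bl: "bilin_on V B" and "finite I" "\<forall>i\<in>I. f i \<in> V"
    and h: "h \<in> V"
  shows "B (\<lambda>x. \<Sum>i\<in>I. a i * f i x) h = (\<Sum>i\<in>I. a i * B (f i) h)"
  using assms(3,4)
proof (induction I rule: finite_induct)
  case empty
  then show ?case using bilin_on_zero_left[OF V Bl h] by simp
next
  case (insert j I)
  then have "(\<lambda>x. \<Sum>i\<in>I. a i * f i x) \<in> V" "f j \<in> V"
    using fun_subspace_sum[OF V] by auto
  with Bl h have "B (lcomb (a j) (f j) 1 (\<lambda>x. \<Sum>i\<in>I. a i * f i x)) h
                   = a j * B (f j) h + 1 * B (\<lambda>x. \<Sum>i\<in>I. a i * f i x) h"
    unfolding bilin_on_def by blast
  also have "\<dots> = (\<Sum>i\<in>insert j I. a i * B (f i) h)"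
    using insert by simp
  finally show ?case
    unfolding lcomb_insert_sum[OF insert.hyps] .
qed

lemma bilin_on_sum_right:
  assumes "fun_subspace V" and "bilin_on V B" and "finite I" "\<forall>i\<in>I. f i \<in> V" and "h \<in> V"
  shows "B h (\<lambda>x. \<Sum>i\<in>I. a i * f i x) = (\<Sum>i\<in>I. a i * B h (f i))"
  using bilin_on_sum_left[OF assms(1) bilin_on_swap[OF assms(2)] assms(3-5)] .

lemma positive_wrt_nonneg:
  assumes "fun_subspace S" and "bilin_on S W" and "lin_on S J"
    and "positive_wrt S W J" and "f \<in> S"
  shows "0 \<le> W f (J f)"
proof (cases "f = (\<lambda>_. 0)")
  case True
  then show ?thesis
    using lin_on_zero[OF assms(1,3)] bilin_on_zero_left[OF assms(1,2) fun_subspace_zero[OF assms(1)]]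
    by simp
next
  case False
  then show ?thesis
    using assms unfolding positive_wrt_def by (simp add: less_imp_le)
qed

lemma sum_mult_sum_swap:
  fixes f :: "'i \<Rightarrow> real"
  shows "(\<Sum>i\<in>I. f i * (\<Sum>b\<in>B. d i b * g b)) = (\<Sum>b\<in>B. (\<Sum>i\<in>I. d i b * f i) * g b)"
  by (simp add: sum_distrib_left sum_distrib_right mult_ac sum.swap[of _ B])

lemma prodf_in_tensor_space: "f \<in> S \<Longrightarrow> F \<in> E \<Longrightarrow> prodf f F \<in> tensor_space S E"
  unfolding tensor_space_def
  by (intro CollectI exI[where x="{0::nat}"] exI[where x="\<lambda>_. f"] exI[where x="\<lambda>_. F"]) simp

definition basis_expansion ::
    "('q \<Rightarrow> real) set \<Rightarrow> (('q \<Rightarrow> real) \<Rightarrow> 'p \<Rightarrow> real) \<Rightarrow> 'p \<times> 'q \<Rightarrow> real" where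
  "basis_expansion B c = (\<lambda>z. \<Sum>b\<in>B. prodf (c b) b z)"

lemma basis_expansion_apply: "basis_expansion B c (x, y) = (\<Sum>b\<in>B. c b x * b y)"
  by (simp add: basis_expansion_def prodf_def)

lemma lcomb_basis_expansion:
  "lcomb a (basis_expansion B c) b (basis_expansion B d)
     = basis_expansion B (\<lambda>\<beta>. lcomb a (c \<beta>) b (d \<beta>))"
  by (auto simp: lcomb_def basis_expansion_apply sum_distrib_left sum.distrib
                 distrib_right mult.assoc)

lemma basis_expansion_cong:
  "(\<And>b. b \<in> B \<Longrightarrow> c b = d b) \<Longrightarrow> basis_expansion B c = basis_expansion B d"
  unfolding basis_expansion_def by (intro ext sum.cong) auto

lemma basis_expansion_zero:
  "(\<And>b. b \<in> B \<Longrightarrow> c b = (\<lambda>_. 0)) \<Longrightarrow> basis_expansion B c = (\<lambda>_. 0)"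
  by (auto simp: basis_expansion_def prodf_def)

lemma act2_basis_expansion:
  assumes M: "\<forall>\<beta>\<in>B. \<beta> \<circ> inv T = (\<lambda>y. \<Sum>b\<in>B. M \<beta> b * b y)"
  shows "act2 T (basis_expansion B e) = basis_expansion B (\<lambda>b x. \<Sum>\<beta>\<in>B. M \<beta> b * e \<beta> x)"
proof -
  have "act2 T (basis_expansion B e) (x, y)
          = basis_expansion B (\<lambda>b x. \<Sum>\<beta>\<in>B. M \<beta> b * e \<beta> x) (x, y)" for x y
  proof -
    have "act2 T (basis_expansion B e) (x, y) = (\<Sum>\<beta>\<in>B. e \<beta> x * (\<beta> \<circ> inv T) y)"
      by (simp add: act2_def basis_expansion_apply)
    also have "\<dots> = (\<Sum>\<beta>\<in>B. e \<beta> x * (\<Sum>b\<in>B. M \<beta> b * b y))"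
      using M by (intro sum.cong) auto
    finally show ?thesis by (simp add: sum_mult_sum_swap basis_expansion_apply)
  qed
  then show ?thesis by auto
qed

locale orthonormal_expansion =
  fixes S :: "('p \<Rightarrow> real) set" and E :: "('q \<Rightarrow> real) set"
    and ip :: "('q \<Rightarrow> real) \<Rightarrow> ('q \<Rightarrow> real) \<Rightarrow> real" and B :: "('q \<Rightarrow> real) set"
  assumes S_subspace: "fun_subspace S"
    and E_subspace: "fun_subspace E"
    and ip_bilin: "bilin_on E ip"
    and B_onb: "orthonormal_basis E ip B"
begin

lemma finite_B: "finite B"
  and B_subset: "B \<subseteq> E"
  and ip_B: "a \<in> B \<Longrightarrow> b \<in> B \<Longrightarrow> ip a b = (if a = b then 1 else 0)"
  and E_spanned: "F \<in> E \<Longrightarrow> \<exists>c. F = (\<lambda>y. \<Sum>b\<in>B. c b * b y)"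
  using B_onb by (auto simp: orthonormal_basis_def)

lemma basis_expansion_coeff_unique:
  assumes eq: "basis_expansion B c = basis_expansion B d" and b0: "b0 \<in> B"
  shows "c b0 = d b0"
proof
  fix x
  let ?G = "\<lambda>y. \<Sum>b\<in>B. (c b x - d b x) * b y"
  have "?G y = basis_expansion B c (x, y) - basis_expansion B d (x, y)" for y
    by (simp add: basis_expansion_apply left_diff_distrib sum_subtractf)
  then have "?G = (\<lambda>_. 0)"
    using eq by simp
  then have "0 = ip ?G b0"
    using bilin_on_zero_left[OF E_subspace ip_bilin] b0 B_subset by auto
  also have "\<dots> = (\<Sum>b\<in>B. (c b x - d b x) * ip b b0)"
    using bilin_on_sum_left[OF E_subspace ip_bilin finite_B,
                            where f="\<lambda>b. b" and h=b0 and a="\<lambda>b. c b x - d b x"] B_subset b0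
    by auto
  also have "\<dots> = (\<Sum>b\<in>B. if b = b0 then c b x - d b x else 0)"
    using ip_B b0 by (intro sum.cong) auto
  also have "\<dots> = c b0 x - d b0 x"
    using finite_B b0 by simp
  finally show "c b0 x = d b0 x" by simp
qed

lemma tensor_space_basis_expansionE:
  assumes "\<Phi> \<in> tensor_space S E"
  obtains c where "\<forall>b\<in>B. c b \<in> S" and "\<Phi> = basis_expansion B c"
proof -
  obtain I :: "nat set" and f F where I: "finite I" and fF: "\<forall>i\<in>I. f i \<in> S \<and> F i \<in> E"
    and \<Phi>: "\<Phi> = (\<lambda>z. \<Sum>i\<in>I. prodf (f i) (F i) z)"
    using assms unfolding tensor_space_def by blast
  have "\<forall>i\<in>I. \<exists>d. F i = (\<lambda>y. \<Sum>b\<in>B. d b * b y)"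
    using E_spanned fF by blast
  then obtain d where d: "\<forall>i\<in>I. F i = (\<lambda>y. \<Sum>b\<in>B. d i b * b y)"
    by metis
  define c where "c = (\<lambda>b x. \<Sum>i\<in>I. d i b * f i x)"
  have "\<forall>b\<in>B. c b \<in> S"
    unfolding c_def using fun_subspace_sum[OF S_subspace I] fF by auto
  moreover have "\<Phi> = basis_expansion B c"
  proof (intro ext, clarify)
    fix x y
    have "\<Phi> (x, y) = (\<Sum>i\<in>I. f i x * (\<Sum>b\<in>B. d i b * b y))"
      using d by (simp add: \<Phi> prodf_def)
    then show "\<Phi> (x, y) = basis_expansion B c (x, y)"
      by (simp only: sum_mult_sum_swap basis_expansion_apply c_def)
  qed
  ultimately show ?thesis
    using that by blast
qed

lemma basis_expansion_in_tensor_space: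
  assumes c: "\<forall>b\<in>B. c b \<in> S"
  shows "basis_expansion B c \<in> tensor_space S E"
proof -
  obtain h where h: "bij_betw h {0..<card B} B"
    using ex_bij_betw_nat_finite[OF finite_B] by blast
  have "basis_expansion B c = (\<lambda>z. \<Sum>i\<in>{0..<card B}. prodf (c (h i)) (h i) z)"
    unfolding basis_expansion_def by (subst sum.reindex_bij_betw[OF h]) simp
  moreover have "\<forall>i\<in>{0..<card B}. c (h i) \<in> S \<and> h i \<in> E"
    using bij_betw_apply[OF h] c B_subset by blast
  ultimately show ?thesis
    unfolding tensor_space_def
    by (intro CollectI exI[where x="{0..<card B}"] exI[where x="\<lambda>i. c (h i)"] exI[where x=h])
      simp
qed

lemma fun_subspace_tensor_space: "fun_subspace (tensor_space S E)"
  unfolding fun_subspace_def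
proof (intro conjI ballI allI)
  show "(\<lambda>_. 0) \<in> tensor_space S E"
    unfolding tensor_space_def by (intro CollectI exI[where x="{}"]) simp
next
  fix \<Phi> \<Psi> a b
  assume \<Phi>: "\<Phi> \<in> tensor_space S E" and \<Psi>: "\<Psi> \<in> tensor_space S E"
  obtain c where c: "\<forall>b\<in>B. c b \<in> S" "\<Phi> = basis_expansion B c"
    using tensor_space_basis_expansionE[OF \<Phi>] by blast
  obtain d where d: "\<forall>b\<in>B. d b \<in> S" "\<Psi> = basis_expansion B d"
    using tensor_space_basis_expansionE[OF \<Psi>] by blast
  have "\<forall>\<beta>\<in>B. lcomb a (c \<beta>) b (d \<beta>) \<in> S"
    using c(1) d(1) fun_subspace_lcomb[OF S_subspace] by blast
  then show "lcomb a \<Phi> b \<Psi> \<in> tensor_space S E"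
    unfolding c(2) d(2) lcomb_basis_expansion by (rule basis_expansion_in_tensor_space)
qed

lemma tensor_J_basis_expansion:
  assumes c: "\<forall>b\<in>B. c b \<in> S"
  shows "tensor_J S B J1 (basis_expansion B c) = basis_expansion B (\<lambda>b. J1 (c b))"
proof -
  define c' where "c' = (SOME c'. (\<forall>b\<in>B. c' b \<in> S) \<and> basis_expansion B c = basis_expansion B c')"
  have "(\<forall>b\<in>B. c' b \<in> S) \<and> basis_expansion B c = basis_expansion B c'"
    unfolding c'_def by (rule someI[where x=c]) (use c in simp)
  then have same_coeffs: "c b = c' b" if "b \<in> B" for b
    using basis_expansion_coeff_unique[of c c' b] that by simp
  have "tensor_J S B J1 (basis_expansion B c) = basis_expansion B (\<lambda>b. J1 (c' b))"
    unfolding tensor_J_def Let_def c'_def basis_expansion_def by (rule refl)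
  also have "\<dots> = basis_expansion B (\<lambda>b. J1 (c b))"
    using same_coeffs by (intro basis_expansion_cong) simp
  finally show ?thesis .
qed

lemma lin_on_tensor_J:
  assumes J1_lin: "lin_on S J1"
  shows "lin_on (tensor_space S E) (tensor_J S B J1)"
  unfolding lin_on_def
proof (intro ballI allI)
  fix \<Phi> \<Psi> a b
  assume \<Phi>: "\<Phi> \<in> tensor_space S E" and \<Psi>: "\<Psi> \<in> tensor_space S E"
  obtain c where c: "\<forall>b\<in>B. c b \<in> S" "\<Phi> = basis_expansion B c"
    using tensor_space_basis_expansionE[OF \<Phi>] by blast
  obtain d where d: "\<forall>b\<in>B. d b \<in> S" "\<Psi> = basis_expansion B d"
    using tensor_space_basis_expansionE[OF \<Psi>] by blast
  have cd: "\<forall>\<beta>\<in>B. lcomb a (c \<beta>) b (d \<beta>) \<in> S"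
    using c(1) d(1) fun_subspace_lcomb[OF S_subspace] by blast
  have "tensor_J S B J1 (lcomb a \<Phi> b \<Psi>)
          = basis_expansion B (\<lambda>\<beta>. J1 (lcomb a (c \<beta>) b (d \<beta>)))"
    unfolding c(2) d(2) lcomb_basis_expansion by (rule tensor_J_basis_expansion[OF cd])
  also have "\<dots> = basis_expansion B (\<lambda>\<beta>. lcomb a (J1 (c \<beta>)) b (J1 (d \<beta>)))"
    using J1_lin c(1) d(1) unfolding lin_on_def by (intro basis_expansion_cong) blast
  also have "\<dots> = lcomb a (tensor_J S B J1 \<Phi>) b (tensor_J S B J1 \<Psi>)"
    unfolding c(2) d(2) tensor_J_basis_expansion[OF c(1)] tensor_J_basis_expansion[OF d(1)]
      lcomb_basis_expansion ..
  finally show "tensor_J S B J1 (lcomb a \<Phi> b \<Psi>)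
                  = lcomb a (tensor_J S B J1 \<Phi>) b (tensor_J S B J1 \<Psi>)" .
qed

lemma tensor_J_in_tensor_space:
  assumes J1_S: "\<forall>f\<in>S. J1 f \<in> S" and \<Phi>: "\<Phi> \<in> tensor_space S E"
  shows "tensor_J S B J1 \<Phi> \<in> tensor_space S E"
proof -
  obtain c where c: "\<forall>b\<in>B. c b \<in> S" "\<Phi> = basis_expansion B c"
    using tensor_space_basis_expansionE[OF \<Phi>] by blast
  have "\<forall>\<beta>\<in>B. J1 (c \<beta>) \<in> S"
    using J1_S c(1) by blast
  then show ?thesis
    unfolding c(2) tensor_J_basis_expansion[OF c(1)] by (rule basis_expansion_in_tensor_space)
qed

lemma tensor_J_tensor_J:
  assumes J1_S: "\<forall>f\<in>S. J1 f \<in> S \<and> J1 (J1 f) = (\<lambda>x. - f x)"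
    and \<Phi>: "\<Phi> \<in> tensor_space S E"
  shows "tensor_J S B J1 (tensor_J S B J1 \<Phi>) = (\<lambda>z. - \<Phi> z)"
proof -
  obtain c where c: "\<forall>b\<in>B. c b \<in> S" "\<Phi> = basis_expansion B c"
    using tensor_space_basis_expansionE[OF \<Phi>] by blast
  have Jc: "\<forall>\<beta>\<in>B. J1 (c \<beta>) \<in> S"
    using J1_S c(1) by blast
  have "tensor_J S B J1 (tensor_J S B J1 \<Phi>) = basis_expansion B (\<lambda>\<beta>. J1 (J1 (c \<beta>)))"
    unfolding c(2) tensor_J_basis_expansion[OF c(1)] by (rule tensor_J_basis_expansion[OF Jc])
  also have "\<dots> = basis_expansion B (\<lambda>\<beta> x. - c \<beta> x)"
    using J1_S c(1) by (intro basis_expansion_cong) blast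
  also have "\<dots> = (\<lambda>z. - \<Phi> z)"
    unfolding c(2) basis_expansion_def prodf_def by (auto simp: sum_negf split: prod.splits)
  finally show ?thesis .
qed

lemma complex_structure_on_tensor_J:
  assumes "complex_structure_on S J1"
  shows "complex_structure_on (tensor_space S E) (tensor_J S B J1)"
  using assms lin_on_tensor_J tensor_J_in_tensor_space tensor_J_tensor_J
  unfolding complex_structure_on_def by blast

context
  fixes w :: "('p \<times> 'q \<Rightarrow> real) \<Rightarrow> ('p \<times> 'q \<Rightarrow> real) \<Rightarrow> real"
    and W :: "('p \<Rightarrow> real) \<Rightarrow> ('p \<Rightarrow> real) \<Rightarrow> real"
  assumes w_bilin: "bilin_on (tensor_space S E) w"
    and w_prod: "\<forall>f\<in>S. \<forall>h\<in>S. \<forall>F\<in>E. \<forall>H\<in>E. w (prodf f F) (prodf h H) = W f h * ip F H"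
begin

lemma w_basis_expansion:
  assumes c: "\<forall>b\<in>B. c b \<in> S" and d: "\<forall>b\<in>B. d b \<in> S"
  shows "w (basis_expansion B c) (basis_expansion B d) = (\<Sum>b\<in>B. W (c b) (d b))"
proof -
  note sum_left = bilin_on_sum_left[OF fun_subspace_tensor_space w_bilin finite_B, where a="\<lambda>_. 1"]
  note sum_right = bilin_on_sum_right[OF fun_subspace_tensor_space w_bilin finite_B, where a="\<lambda>_. 1"]
  have prod_in: "\<forall>b\<in>B. prodf (e b) b \<in> tensor_space S E" if "\<forall>b\<in>B. e b \<in> S" for e
    using that B_subset prodf_in_tensor_space by blast
  have "w (basis_expansion B c) (basis_expansion B d)
          = (\<Sum>b\<in>B. w (prodf (c b) b) (basis_expansion B d))"
    using sum_left prod_in[OF c] basis_expansion_in_tensor_space[OF d]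
    by (simp add: basis_expansion_def)
  also have "\<dots> = (\<Sum>b\<in>B. \<Sum>b'\<in>B. w (prodf (c b) b) (prodf (d b') b'))"
    using sum_right prod_in[OF c] prod_in[OF d] by (simp add: basis_expansion_def)
  also have "\<dots> = (\<Sum>b\<in>B. \<Sum>b'\<in>B. if b' = b then W (c b) (d b) else 0)"
    using w_prod c d B_subset ip_B by (intro sum.cong refl) (auto simp: subset_iff)
  also have "\<dots> = (\<Sum>b\<in>B. W (c b) (d b))"
    using finite_B by simp
  finally show ?thesis .
qed

lemma w_tensor_J_tensor_J:
  assumes J1_S: "\<forall>f\<in>S. J1 f \<in> S"
    and J1_W: "\<forall>f\<in>S. \<forall>g\<in>S. W (J1 f) (J1 g) = W f g"
    and \<Phi>: "\<Phi> \<in> tensor_space S E" and \<Psi>: "\<Psi> \<in> tensor_space S E"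
  shows "w (tensor_J S B J1 \<Phi>) (tensor_J S B J1 \<Psi>) = w \<Phi> \<Psi>"
proof -
  obtain c where c: "\<forall>b\<in>B. c b \<in> S" "\<Phi> = basis_expansion B c"
    using tensor_space_basis_expansionE[OF \<Phi>] by blast
  obtain d where d: "\<forall>b\<in>B. d b \<in> S" "\<Psi> = basis_expansion B d"
    using tensor_space_basis_expansionE[OF \<Psi>] by blast
  have Jc: "\<forall>\<beta>\<in>B. J1 (c \<beta>) \<in> S" and Jd: "\<forall>\<beta>\<in>B. J1 (d \<beta>) \<in> S"
    using J1_S c(1) d(1) by auto
  have "w (tensor_J S B J1 \<Phi>) (tensor_J S B J1 \<Psi>) = (\<Sum>\<beta>\<in>B. W (J1 (c \<beta>)) (J1 (d \<beta>)))"
    unfolding c(2) d(2) tensor_J_basis_expansion[OF c(1)] tensor_J_basis_expansion[OF d(1)]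
    by (rule w_basis_expansion[OF Jc Jd])
  also have "\<dots> = (\<Sum>\<beta>\<in>B. W (c \<beta>) (d \<beta>))"
    using J1_W c(1) d(1) by (intro sum.cong) auto
  also have "\<dots> = w \<Phi> \<Psi>"
    unfolding c(2) d(2) by (rule w_basis_expansion[OF c(1) d(1), symmetric])
  finally show ?thesis .
qed

lemma w_tensor_J_pos:
  assumes W_bilin: "bilin_on S W"
    and J1: "complex_structure_on S J1" and J1_pos: "positive_wrt S W J1"
    and \<Phi>: "\<Phi> \<in> tensor_space S E" and nonzero: "\<Phi> \<noteq> (\<lambda>_. 0)"
  shows "w \<Phi> (tensor_J S B J1 \<Phi>) > 0"
proof -
  have J1_lin: "lin_on S J1" and J1_S: "\<forall>f\<in>S. J1 f \<in> S"
    using J1 by (auto simp: complex_structure_on_def)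
  obtain c where c: "\<forall>b\<in>B. c b \<in> S" "\<Phi> = basis_expansion B c"
    using tensor_space_basis_expansionE[OF \<Phi>] by blast
  have Jc: "\<forall>\<beta>\<in>B. J1 (c \<beta>) \<in> S"
    using J1_S c(1) by auto
  obtain \<beta>0 where \<beta>0: "\<beta>0 \<in> B" "c \<beta>0 \<noteq> (\<lambda>_. 0)"
    using basis_expansion_zero[of B c] nonzero c(2) by blast
  have "0 < (\<Sum>\<beta>\<in>B. W (c \<beta>) (J1 (c \<beta>)))"
  proof (rule sum_pos2[OF finite_B \<beta>0(1)])
    show "0 < W (c \<beta>0) (J1 (c \<beta>0))"
      using J1_pos \<beta>0 c(1) unfolding positive_wrt_def by blast
    show "0 \<le> W (c \<beta>) (J1 (c \<beta>))" if "\<beta> \<in> B" for \<beta>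
      using positive_wrt_nonneg[OF S_subspace W_bilin J1_lin J1_pos] c(1) that by blast
  qed
  also have "\<dots> = w \<Phi> (tensor_J S B J1 \<Phi>)"
    unfolding c(2) tensor_J_basis_expansion[OF c(1)]
    by (rule w_basis_expansion[OF c(1) Jc, symmetric])
  finally show ?thesis .
qed

lemma positive_wrt_tensor_J:
  assumes "bilin_on S W" and "complex_structure_on S J1" and "positive_wrt S W J1"
  shows "positive_wrt (tensor_space S E) w (tensor_J S B J1)"
  using assms w_tensor_J_tensor_J w_tensor_J_pos
  unfolding positive_wrt_def complex_structure_on_def by blast

end

lemma tensor_J_act2_commute:
  assumes J1_lin: "lin_on S J1" and T_E: "\<forall>F\<in>E. F \<circ> inv T \<in> E"
    and \<Phi>: "\<Phi> \<in> tensor_space S E"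
  shows "tensor_J S B J1 (act2 T \<Phi>) = act2 T (tensor_J S B J1 \<Phi>)"
proof -
  obtain c where c: "\<forall>b\<in>B. c b \<in> S" "\<Phi> = basis_expansion B c"
    using tensor_space_basis_expansionE[OF \<Phi>] by blast
  have "\<forall>\<beta>\<in>B. \<exists>m. \<beta> \<circ> inv T = (\<lambda>y. \<Sum>b\<in>B. m b * b y)"
  proof
    fix \<beta> assume "\<beta> \<in> B"
    then show "\<exists>m. \<beta> \<circ> inv T = (\<lambda>y. \<Sum>b\<in>B. m b * b y)"
      using E_spanned[of "\<beta> \<circ> inv T"] T_E B_subset by blast
  qed
  then obtain M where M: "\<forall>\<beta>\<in>B. \<beta> \<circ> inv T = (\<lambda>y. \<Sum>b\<in>B. M \<beta> b * b y)"
    by metis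
  have Mc: "\<forall>b\<in>B. (\<lambda>x. \<Sum>\<beta>\<in>B. M \<beta> b * c \<beta> x) \<in> S"
    by (intro ballI fun_subspace_sum[OF S_subspace finite_B c(1)])
  have "tensor_J S B J1 (act2 T \<Phi>)
          = basis_expansion B (\<lambda>b. J1 (\<lambda>x. \<Sum>\<beta>\<in>B. M \<beta> b * c \<beta> x))"
    unfolding c(2) act2_basis_expansion[OF M] by (rule tensor_J_basis_expansion[OF Mc])
  also have "\<dots> = basis_expansion B (\<lambda>b x. \<Sum>\<beta>\<in>B. M \<beta> b * J1 (c \<beta>) x)"
    using lin_on_sum[OF S_subspace J1_lin finite_B] c(1) by simp
  also have "\<dots> = act2 T (tensor_J S B J1 \<Phi>)"
    unfolding c(2) tensor_J_basis_expansion[OF c(1)] act2_basis_expansion[OF M] ..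
  finally show ?thesis .
qed

end

theorem theorem2:
  fixes S :: "('p \<Rightarrow> real) set"
    and E :: "('q \<Rightarrow> real) set"
    and W :: "('p \<Rightarrow> real) \<Rightarrow> ('p \<Rightarrow> real) \<Rightarrow> real"
    and ip :: "('q \<Rightarrow> real) \<Rightarrow> ('q \<Rightarrow> real) \<Rightarrow> real"
    and w :: "('p \<times> 'q \<Rightarrow> real) \<Rightarrow> ('p \<times> 'q \<Rightarrow> real) \<Rightarrow> real"
    and B :: "('q \<Rightarrow> real) set"
    and J1 :: "('p \<Rightarrow> real) \<Rightarrow> ('p \<Rightarrow> real)"
  assumes S_sub: "fun_subspace S"
    and E_sub: "fun_subspace E"
    and W_skew: "skew_form_on S W"
    and ip_bilin: "bilin_on E ip"
    and ip_sym: "\<forall>F\<in>E. \<forall>G\<in>E. ip F G = ip G F"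
    and ip_pos: "\<forall>F\<in>E. F \<noteq> (\<lambda>_. 0) \<longrightarrow> ip F F > 0"
    and B_onb: "orthonormal_basis E ip B"
    and w_skew: "skew_form_on (tensor_space S E) w"
    and w_prod: "\<forall>f\<in>S. \<forall>h\<in>S. \<forall>F\<in>E. \<forall>H\<in>E.
                   w (prodf f F) (prodf h H) = W f h * ip F H"
    and J1_cs: "complex_structure_on S J1"
    and J1_pos: "positive_wrt S W J1"
  shows "complex_structure_on (tensor_space S E) (tensor_J S B J1)
       \<and> positive_wrt (tensor_space S E) w (tensor_J S B J1)
       \<and> (\<forall>T::'q \<Rightarrow> 'q. bij T
            \<and> (\<forall>F\<in>E. F \<circ> inv T \<in> E)
            \<and> (\<forall>F\<in>E. \<forall>G\<in>E. ip (F \<circ> inv T) (G \<circ> inv T) = ip F G)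
            \<longrightarrow> (\<forall>\<Phi>\<in>tensor_space S E.
                   tensor_J S B J1 (act2 T \<Phi>) = act2 T (tensor_J S B J1 \<Phi>)))"
proof -
  interpret orthonormal_expansion S E ip B
    by (fact orthonormal_expansion.intro[OF S_sub E_sub ip_bilin B_onb])
  have W_bilin: "bilin_on S W" and w_bilin: "bilin_on (tensor_space S E) w"
    using W_skew w_skew by (simp_all add: skew_form_on_def)
  have J1_lin: "lin_on S J1"
    using J1_cs by (simp add: complex_structure_on_def)
  show ?thesis
    using complex_structure_on_tensor_J[OF J1_cs]
      positive_wrt_tensor_J[OF w_bilin w_prod W_bilin J1_cs J1_pos]
      tensor_J_act2_commute[OF J1_lin]
    by blast
qed

end
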